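(* Let $\mathcal{C}$ be a finite set of classes and let $\ell_\star, \ell_1, \dots, \ell_K$ ($K \ge 1$) be $\mathcal{C}$-valued random variables on a common probability space, where $\ell_\star$ is the oracle label and $\ell_i$ is the label given by annotator $i$. Assume the annotators are positively correlated, namely $\mathbb{P}(\ell_i = \ell_\star \mid \ell_j = \ell_\star) \ge \mathbb{P}(\ell_i = \ell_\star)$ for all $i, j \in \{1, \dots, K\}$ with $\mathbb{P}(\ell_j = \ell_\star) > 0$. Then $$\frac{1}{K}\sum_{i=1}^K \mathbb{P}(\ell_i = \ell_\star) \;\le\; \mathcal{U} := \sqrt{\frac{1}{K^2}\sum_{i=1}^K\sum_{j=1}^K \mathbb{P}(\ell_i = \ell_j)}.$$
   Context: The quantity $\frac{1}{K}\sum_{i=1}^K \mathbb{P}(\ell_i = \ell_\star)$ is the oracle accuracy $\mathbb{P}(\ell_{\mathcal K} = \ell_\star)$ of the "average annotator" $\ell_{\mathcal K}$, i.e. the label obtained by choosing one of the $K$ annotators uniformly at random (independently of everything else). *)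

theory Defs
  imports "HOL-Probability.Probability"
begin

end

theory Submission
  imports Defs
begin

text \<open>Positive correlation gives
  \<open>P(l\<^sub>i = l\<^sub>\<star>) P(l\<^sub>j = l\<^sub>\<star>) \<le> P(l\<^sub>i = l\<^sub>\<star> = l\<^sub>j) \<le> P(l\<^sub>i = l\<^sub>j)\<close>;
  summing over all pairs \<open>i, j\<close> bounds the square of the average accuracy by the average
  pairwise agreement.\<close>

lemma sets_Collect_eq_count_space:
  assumes f: "f \<in> M \<rightarrow>\<^sub>M count_space C" and g: "g \<in> M \<rightarrow>\<^sub>M count_space C"
    and "countable C"
  shows "{x \<in> space M. f x = g x} \<in> sets M"
proof -
  have "(\<lambda>x. f x = g x) \<in> M \<rightarrow>\<^sub>M count_space UNIV"
  proof (rule measurable_compose_countable'[where f = "\<lambda>c x. c = g x", OF _ f \<open>countable C\<close>])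
    show "(\<lambda>x. c = g x) \<in> M \<rightarrow>\<^sub>M count_space UNIV" if "c \<in> C" for c
      using pred_eq_const2[OF g] that by (simp add: pred_def)
  qed
  then show ?thesis
    by (simp add: pred_def)
qed

lemma (in prob_space) prob_mult_le_prob_conj_of_cond_prob_ge:
  assumes "\<P>(x in M. Q x) > 0 \<Longrightarrow> \<P>(x in M. P x \<bar> Q x) \<ge> \<P>(x in M. P x)"
  shows "\<P>(x in M. P x) * \<P>(x in M. Q x) \<le> \<P>(x in M. P x \<and> Q x)"
proof (cases "\<P>(x in M. Q x) > 0")
  case True
  then show ?thesis
    using assms by (simp add: cond_prob_def pos_le_divide_eq)
next
  case False
  then have "\<P>(x in M. Q x) = 0"
    using measure_nonneg[of M "{x \<in> space M. Q x}"] by linarith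
  then show ?thesis
    by simp
qed

lemma power2_sum_le_double_sum:
  fixes p :: "'i \<Rightarrow> real"
  assumes "\<And>i j. i \<in> I \<Longrightarrow> j \<in> I \<Longrightarrow> p i * p j \<le> q i j"
  shows "(\<Sum>i\<in>I. p i)\<^sup>2 \<le> (\<Sum>i\<in>I. \<Sum>j\<in>I. q i j)"
proof -
  have "(\<Sum>i\<in>I. p i)\<^sup>2 = (\<Sum>i\<in>I. \<Sum>j\<in>I. p i * p j)"
    by (simp add: power2_eq_square sum_product)
  also have "\<dots> \<le> (\<Sum>i\<in>I. \<Sum>j\<in>I. q i j)"
    using assms by (intro sum_mono) auto
  finally show ?thesis .
qed

theorem theorem1:
  fixes M :: "'a measure" and C :: "'c set" and K :: nat
    and lstar :: "'a \<Rightarrow> 'c" and l :: "nat \<Rightarrow> 'a \<Rightarrow> 'c"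
  assumes "prob_space M"
    and "finite C"
    and "K \<ge> 1"
    and "lstar \<in> measurable M (count_space C)"
    and "\<And>i. i \<in> {1..K} \<Longrightarrow> l i \<in> measurable M (count_space C)"
    and "\<And>i j. i \<in> {1..K} \<Longrightarrow> j \<in> {1..K} \<Longrightarrow>
           \<P>(\<omega> in M. l j \<omega> = lstar \<omega>) > 0 \<Longrightarrow>
           \<P>(\<omega> in M. l i \<omega> = lstar \<omega> \<bar> l j \<omega> = lstar \<omega>)
             \<ge> \<P>(\<omega> in M. l i \<omega> = lstar \<omega>)"
  shows "(1 / real K) * (\<Sum>i=1..K. \<P>(\<omega> in M. l i \<omega> = lstar \<omega>))
         \<le> sqrt ((1 / (real K)^2) * (\<Sum>i=1..K. \<Sum>j=1..K. \<P>(\<omega> in M. l i \<omega> = l j \<omega>)))"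
proof -
  interpret prob_space M by fact
  let ?acc = "\<lambda>i. \<P>(\<omega> in M. l i \<omega> = lstar \<omega>)"
  let ?agree = "\<lambda>i j. \<P>(\<omega> in M. l i \<omega> = l j \<omega>)"
  have "?acc i * ?acc j \<le> ?agree i j" if "i \<in> {1..K}" "j \<in> {1..K}" for i j
  proof -
    have "?acc i * ?acc j \<le> \<P>(\<omega> in M. l i \<omega> = lstar \<omega> \<and> l j \<omega> = lstar \<omega>)"
      using assms(6)[OF that] by (rule prob_mult_le_prob_conj_of_cond_prob_ge)
    also have "\<dots> \<le> ?agree i j"
      using assms(2,5) that
      by (intro finite_measure_mono sets_Collect_eq_count_space) (auto intro: countable_finite)
    finally show ?thesis .
  qed
  then have "(\<Sum>i=1..K. ?acc i)\<^sup>2 \<le> (\<Sum>i=1..K. \<Sum>j=1..K. ?agree i j)"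
    by (rule power2_sum_le_double_sum)
  then have "((1 / real K) * (\<Sum>i=1..K. ?acc i))\<^sup>2
      \<le> (1 / (real K)^2) * (\<Sum>i=1..K. \<Sum>j=1..K. ?agree i j)"
    by (simp add: power_mult_distrib power_divide divide_right_mono)
  then show ?thesis
    by (rule real_le_rsqrt)
qed

end
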